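(* Let $(X,d_X,\mu,T)$ and $(Y,d_Y,\nu,S)$ be compact metric measure-preserving systems with $T,S$ continuous, and fix anchor sequences $(a_r)$ dense in $\operatorname{supp}\mu$ and $(b_r)$ dense in $\operatorname{supp}\nu$. If the systems are not disjoint, then there are $n,m,R\ge1$ and a $1$-Lipschitz continuous function $\psi$ on the finite anchored array cube such that \[\sup_{\lambda\in\mathcal J(T,S)}\Bigl|\int\psi\,d\widetilde\Phi_{n,m,R}(\lambda)-\int\psi\,d\widetilde\Phi_{n,m,R}(\mu\otimes\nu)\Bigr|>0.\] In particular $\widetilde{\mathrm{Dep}}_{n,m,R,1}(X,Y)>0$ for some finite triple $(n,m,R)$.
   Context: A compact metric measure-preserving system $(X,d_X,\mu,T)$: $(X,d_X)$ compact metric, $\mu$ Borel probability, $T$ Borel with $T_\#\mu=\mu$. $\mathcal J(T,S)$: Borel probability measures on $X\times Y$ with marginals $\mu,\nu$ invariant under $T\times S$; disjoint means $\mathcal J(T,S)=\{\mu\otimes\nu\}$. For $z_i=(x_i,y_i)$: $\widetilde{\mathcal D}^X_{n,m,R}=\bigl((d_X(T^ax_i,T^bx_j))_{1\le i,j\le n,0\le a,b<m},(d_X(T^ax_i,a_r))_{1\le i\le n,0\le a<m,1\le r\le R}\bigr)$, $\widetilde{\mathcal D}^Y_{n,m,R}$ analogously with $d_Y,S,b_r$; these take values in a compact cube (the finite anchored array cube, with a product Euclidean metric), and $\widetilde\Phi_{n,m,R}(\lambda)=\mathrm{Law}_{\lambda^{\otimes n}}(\widetilde{\mathcal D}^X_{n,m,R},\widetilde{\mathcal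 D}^Y_{n,m,R})$. $\widetilde{\mathrm{Dep}}_{n,m,R,1}(X,Y)=\sup_{\lambda\in\mathcal J(T,S)}W_1(\widetilde\Phi_{n,m,R}(\lambda),\widetilde\Phi_{n,m,R}(\mu\otimes\nu))$, with $W_1$ the 1-Wasserstein distance on the array cube. *)

theory Defs
  imports "HOL-Probability.Probability"
begin

definition msupp :: "'a::metric_space measure \<Rightarrow> 'a set" where
  "msupp M = {x. \<forall>e>0. emeasure M (ball x e) > 0}"

definition joinings ::
  "'a::metric_space measure \<Rightarrow> 'b::metric_space measure \<Rightarrow> ('a \<Rightarrow> 'a) \<Rightarrow> ('b \<Rightarrow> 'b)
   \<Rightarrow> ('a \<times> 'b) measure set" where
  "joinings \<mu> \<nu> T S = {L. sets L = sets (borel :: ('a \<times> 'b) measure) \<and> prob_space L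
      \<and> distr L \<mu> fst = \<mu> \<and> distr L \<nu> snd = \<nu>
      \<and> distr L L (map_prod T S) = L}"

definition disjoint_sys ::
  "'a::metric_space measure \<Rightarrow> 'b::metric_space measure \<Rightarrow> ('a \<Rightarrow> 'a) \<Rightarrow> ('b \<Rightarrow> 'b) \<Rightarrow> bool" where
  "disjoint_sys \<mu> \<nu> T S \<longleftrightarrow> joinings \<mu> \<nu> T S = {\<mu> \<Otimes>\<^sub>M \<nu>}"

text \<open>Coordinates of the anchored arrays (0-based: point index i<n, times p,q<m,
  anchor index r<R, where anchor r stands for the paper's a_{r+1}).\<close>
datatype aidx = XD nat nat nat nat | XA nat nat nat | YD nat nat nat nat | YA nat nat nat

definition arr_idx :: "nat \<Rightarrow> nat \<Rightarrow> nat \<Rightarrow> aidx set" where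
  "arr_idx n m R =
     {XD i j p q | i j p q. i < n \<and> j < n \<and> p < m \<and> q < m}
   \<union> {XA i p r | i p r. i < n \<and> p < m \<and> r < R}
   \<union> {YD i j p q | i j p q. i < n \<and> j < n \<and> p < m \<and> q < m}
   \<union> {YA i p r | i p r. i < n \<and> p < m \<and> r < R}"

definition anch_arr ::
  "nat \<Rightarrow> nat \<Rightarrow> nat \<Rightarrow> ('a::metric_space \<Rightarrow> 'a) \<Rightarrow> ('b::metric_space \<Rightarrow> 'b)
   \<Rightarrow> (nat \<Rightarrow> 'a) \<Rightarrow> (nat \<Rightarrow> 'b) \<Rightarrow> (nat \<Rightarrow> 'a \<times> 'b) \<Rightarrow> (aidx \<Rightarrow> real)" where
  "anch_arr n m R T S a b z = restrict (\<lambda>k. case k of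
       XD i j p q \<Rightarrow> dist ((T ^^ p) (fst (z i))) ((T ^^ q) (fst (z j)))
     | XA i p r \<Rightarrow> dist ((T ^^ p) (fst (z i))) (a r)
     | YD i j p q \<Rightarrow> dist ((S ^^ p) (snd (z i))) ((S ^^ q) (snd (z j)))
     | YA i p r \<Rightarrow> dist ((S ^^ p) (snd (z i))) (b r)) (arr_idx n m R)"

definition arr_space :: "nat \<Rightarrow> nat \<Rightarrow> nat \<Rightarrow> (aidx \<Rightarrow> real) measure" where
  "arr_space n m R = PiM (arr_idx n m R) (\<lambda>_. borel)"

definition arr_dist :: "nat \<Rightarrow> nat \<Rightarrow> nat \<Rightarrow> (aidx \<Rightarrow> real) \<Rightarrow> (aidx \<Rightarrow> real) \<Rightarrow> real" where
  "arr_dist n m R f g = L2_set (\<lambda>k. f k - g k) (arr_idx n m R)"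

definition arr_cube :: "'a::metric_space itself \<Rightarrow> 'b::metric_space itself
     \<Rightarrow> nat \<Rightarrow> nat \<Rightarrow> nat \<Rightarrow> (aidx \<Rightarrow> real) set" where
  "arr_cube _ _ n m R = {f \<in> PiE (arr_idx n m R) (\<lambda>_. UNIV). \<forall>k\<in>arr_idx n m R.
      0 \<le> f k \<and> f k \<le> (case k of XD _ _ _ _ \<Rightarrow> diameter (UNIV :: 'a set)
                                  | XA _ _ _ \<Rightarrow> diameter (UNIV :: 'a set)
                                  | YD _ _ _ _ \<Rightarrow> diameter (UNIV :: 'b set)
                                  | YA _ _ _ \<Rightarrow> diameter (UNIV :: 'b set))}"

definition Phi ::
  "nat \<Rightarrow> nat \<Rightarrow> nat \<Rightarrow> ('a::metric_space \<Rightarrow> 'a) \<Rightarrow> ('b::metric_space \<Rightarrow> 'b)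
   \<Rightarrow> (nat \<Rightarrow> 'a) \<Rightarrow> (nat \<Rightarrow> 'b) \<Rightarrow> ('a \<times> 'b) measure \<Rightarrow> (aidx \<Rightarrow> real) measure" where
  "Phi n m R T S a b L =
     distr (PiM {..<n} (\<lambda>_. L)) (arr_space n m R) (anch_arr n m R T S a b)"

definition arr_couplings :: "nat \<Rightarrow> nat \<Rightarrow> nat \<Rightarrow> (aidx \<Rightarrow> real) measure \<Rightarrow> (aidx \<Rightarrow> real) measure
     \<Rightarrow> ((aidx \<Rightarrow> real) \<times> (aidx \<Rightarrow> real)) measure set" where
  "arr_couplings n m R P Q = {\<pi>. sets \<pi> = sets (arr_space n m R \<Otimes>\<^sub>M arr_space n m R)
      \<and> prob_space \<pi> \<and> distr \<pi> (arr_space n m R) fst = P \<and> distr \<pi> (arr_space n m R) snd = Q}"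

definition W1 :: "nat \<Rightarrow> nat \<Rightarrow> nat \<Rightarrow> (aidx \<Rightarrow> real) measure \<Rightarrow> (aidx \<Rightarrow> real) measure \<Rightarrow> real" where
  "W1 n m R P Q = (INF \<pi>\<in>arr_couplings n m R P Q. \<integral>w. arr_dist n m R (fst w) (snd w) \<partial>\<pi>)"

definition Dep1 ::
  "nat \<Rightarrow> nat \<Rightarrow> nat \<Rightarrow> 'a::metric_space measure \<Rightarrow> 'b::metric_space measure
   \<Rightarrow> ('a \<Rightarrow> 'a) \<Rightarrow> ('b \<Rightarrow> 'b) \<Rightarrow> (nat \<Rightarrow> 'a) \<Rightarrow> (nat \<Rightarrow> 'b) \<Rightarrow> real" where
  "Dep1 n m R \<mu> \<nu> T S a b =
     (SUP L\<in>joinings \<mu> \<nu> T S. W1 n m R (Phi n m R T S a b L) (Phi n m R T S a b (\<mu> \<Otimes>\<^sub>M \<nu>)))"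

end

theory Submission
  imports Defs
begin

text \<open>If the systems are not disjoint, some joining \<lambda> differs from \<mu> \<otimes> \<nu>. Borel probabilities
  on the compact space X \<times> Y are determined by their values on products C \<times> D of closed sets, and
  the measure of C \<times> D is the limit of the integrals of f(x) g(y), where f = max 0 (1 - k dist(-, C))
  and g = max 0 (1 - k dist(-, D)) are k-Lipschitz cutoffs and k \<rightarrow> \<infinity>. On the closure of the
  anchors a k-Lipschitz function f is the limit, as R \<rightarrow> \<infinity>, of its McShane extensions
  x \<mapsto> min {f(a r) + k dist(x, a r) | r < R} from finitely many anchors, and every joining lives on
  the product of these closures. So one such anchored product already separates \<lambda> from \<mu> \<otimes> \<nu>.
  It depends on a point only through its anchor distances, i.e. through the anchored array with
  n = m = 1, on which it becomes 1-Lipschitz after dividing by 2k; integrating it against any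
  coupling of the two array laws bounds the difference of its integrals by the coupling cost,
  whence W1 > 0.\<close>

section \<open>Borel sets of products of compact metric spaces\<close>

lemma compact_space_countable_base:
  assumes "compact (UNIV :: 'a::metric_space set)"
  obtains \<B> :: "'a::metric_space set set"
  where "countable \<B>" "\<And>V. V \<in> \<B> \<Longrightarrow> open V"
    "\<And>U x. open U \<Longrightarrow> x \<in> U \<Longrightarrow> \<exists>V\<in>\<B>. x \<in> V \<and> V \<subseteq> U"
proof -
  obtain f :: "real \<Rightarrow> 'a set" where f: "\<forall>\<epsilon>>0. finite (f \<epsilon>) \<and> UNIV \<subseteq> (\<Union>x\<in>f \<epsilon>. ball x \<epsilon>)"
    by (metis assms compact_imp_seq_compact seq_compact_imp_totally_bounded)
  define \<B> where "\<B> = (\<lambda>(x, r). ball x r) ` ((\<Union>\<epsilon>\<in>\<rat> \<inter> {0<..}. f \<epsilon>) \<times> \<rat>)"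
  have "countable \<B>"
    unfolding \<B>_def using f
    by (intro countable_image countable_SIGMA countable_UN countable_Int1 countable_rat)
      (auto intro: countable_finite)
  moreover have "open V" if "V \<in> \<B>" for V
    using that by (auto simp: \<B>_def)
  moreover have "\<exists>V\<in>\<B>. x \<in> V \<and> V \<subseteq> U" if "open U" "x \<in> U" for U x
  proof -
    obtain \<epsilon> where "0 < \<epsilon>" "ball x \<epsilon> \<subseteq> U"
      using \<open>open U\<close> \<open>x \<in> U\<close> by (meson openE)
    obtain r where r: "r \<in> \<rat>" "0 < r" "r < \<epsilon> / 2"
      using Rats_dense_in_real[of 0 "\<epsilon> / 2"] \<open>0 < \<epsilon>\<close> by auto
    then obtain c where c: "c \<in> f r" "x \<in> ball c r"
      using f by blast
    have "ball c r \<subseteq> ball x \<epsilon>"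
    proof
      fix y assume "y \<in> ball c r"
      then show "y \<in> ball x \<epsilon>"
        using c(2) r(3) dist_triangle3[of x y c] by (simp add: dist_commute)
    qed
    moreover have "ball c r \<in> \<B>"
      using r c(1) by (auto simp: \<B>_def)
    ultimately show ?thesis
      using c(2) \<open>ball x \<epsilon> \<subseteq> U\<close> by blast
  qed
  ultimately show thesis
    using that by blast
qed

lemma sets_borel_prod_of_countable_bases:
  fixes \<B>\<^sub>a :: "'a::topological_space set set" and \<B>\<^sub>b :: "'b::topological_space set set"
  assumes "countable \<B>\<^sub>a" "\<And>V. V \<in> \<B>\<^sub>a \<Longrightarrow> open V"
    "\<And>U x. open U \<Longrightarrow> x \<in> U \<Longrightarrow> \<exists>V\<in>\<B>\<^sub>a. x \<in> V \<and> V \<subseteq> U"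
    and "countable \<B>\<^sub>b" "\<And>V. V \<in> \<B>\<^sub>b \<Longrightarrow> open V"
    "\<And>U y. open U \<Longrightarrow> y \<in> U \<Longrightarrow> \<exists>V\<in>\<B>\<^sub>b. y \<in> V \<and> V \<subseteq> U"
  shows "sets (borel :: ('a \<times> 'b) measure) = sets (borel \<Otimes>\<^sub>M borel)"
proof
  show "sets (borel \<Otimes>\<^sub>M borel) \<subseteq> sets (borel :: ('a \<times> 'b) measure)"
  proof (rule sets_pair_in_sets)
    fix A :: "'a set" and B :: "'b set"
    assume "A \<in> sets borel" "B \<in> sets borel"
    moreover have "fst \<in> borel_measurable (borel :: ('a \<times> 'b) measure)"
      "snd \<in> borel_measurable (borel :: ('a \<times> 'b) measure)"
      by (intro borel_measurable_continuous_onI continuous_intros)+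
    ultimately have "fst -` A \<inter> snd -` B \<in> sets (borel :: ('a \<times> 'b) measure)"
      using measurable_sets by (metis sets.Int space_borel inf_top.right_neutral)
    moreover have "fst -` A \<inter> snd -` B = A \<times> B" by auto
    ultimately show "A \<times> B \<in> sets borel" by simp
  qed
next
  have "U \<in> sets (borel \<Otimes>\<^sub>M borel)" if "open U" for U :: "('a \<times> 'b) set"
  proof -
    define \<C> where "\<C> = {V \<times> W | V W. V \<in> \<B>\<^sub>a \<and> W \<in> \<B>\<^sub>b \<and> V \<times> W \<subseteq> U}"
    have "\<C> \<subseteq> (\<lambda>(V, W). V \<times> W) ` (\<B>\<^sub>a \<times> \<B>\<^sub>b)"
      by (auto simp: \<C>_def)
    then have "countable \<C>"
      using assms(1,4) by (meson countable_SIGMA countable_image countable_subset)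
    moreover have "\<C> \<subseteq> sets (borel \<Otimes>\<^sub>M borel)"
      using assms(2,5) by (auto simp: \<C>_def)
    moreover have "U = \<Union>\<C>"
    proof
      show "U \<subseteq> \<Union>\<C>"
      proof
        fix z assume "z \<in> U"
        then obtain A B where "open A" "open B" "fst z \<in> A" "snd z \<in> B" "A \<times> B \<subseteq> U"
          using \<open>open U\<close> by (metis open_prod_elim prod.collapse mem_Sigma_iff)
        then obtain V W where "V \<in> \<B>\<^sub>a" "fst z \<in> V" "V \<subseteq> A" "W \<in> \<B>\<^sub>b" "snd z \<in> W" "W \<subseteq> B"
          using assms(3,6) by meson
        moreover from this have "V \<times> W \<subseteq> U"
          using \<open>A \<times> B \<subseteq> U\<close> by blast
        ultimately have "V \<times> W \<in> \<C>" "z \<in> V \<times> W"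
          unfolding \<C>_def by (auto simp: mem_Times_iff)
        then show "z \<in> \<Union>\<C>" by blast
      qed
    qed (auto simp: \<C>_def)
    ultimately show ?thesis
      using sets.countable_Union by metis
  qed
  then show "sets (borel :: ('a \<times> 'b) measure) \<subseteq> sets (borel \<Otimes>\<^sub>M borel)"
    unfolding sets_borel
    by (intro sets.sigma_sets_subset') (auto simp: space_pair_measure)
qed

lemma sets_borel_prod_compact:
  assumes "compact (UNIV :: 'a::metric_space set)" "compact (UNIV :: 'b::metric_space set)"
  shows "sets (borel :: ('a \<times> 'b) measure) = sets (borel \<Otimes>\<^sub>M borel)"
proof -
  obtain \<B>\<^sub>a :: "'a set set" where "countable \<B>\<^sub>a" "\<And>V. V \<in> \<B>\<^sub>a \<Longrightarrow> open V"
    "\<And>U x. open U \<Longrightarrow> x \<in> U \<Longrightarrow> \<exists>V\<in>\<B>\<^sub>a. x \<in> V \<and> V \<subseteq> U"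
    by (rule compact_space_countable_base[OF assms(1)]) blast
  moreover obtain \<B>\<^sub>b :: "'b set set" where "countable \<B>\<^sub>b" "\<And>V. V \<in> \<B>\<^sub>b \<Longrightarrow> open V"
    "\<And>U y. open U \<Longrightarrow> y \<in> U \<Longrightarrow> \<exists>V\<in>\<B>\<^sub>b. y \<in> V \<and> V \<subseteq> U"
    by (rule compact_space_countable_base[OF assms(2)]) blast
  ultimately show ?thesis
    by (rule sets_borel_prod_of_countable_bases)
qed

section \<open>Supports and joinings\<close>

lemma AE_in_closed_superset_msupp:
  fixes M :: "'a::metric_space measure"
  assumes "compact (UNIV :: 'a set)" and M: "sets M = sets borel"
    and "closed A" and "msupp M \<subseteq> A"
  shows "AE x in M. x \<in> A"
proof (rule AE_I')
  \<comment> \<open>- A is exhausted by the closed, hence compact, sets K j, each of which is covered by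
    finitely many null balls.\<close>
  define K where "K j = {x. \<forall>y\<in>A. 1 / Suc j \<le> dist x y}" for j :: nat
  have K_closed: "closed (K j)" for j
    unfolding K_def Ball_def
    by (intro closed_Collect_all closed_Collect_imp closed_Collect_le) (auto intro: continuous_intros)
  have "emeasure M (K j) = 0" for j
  proof -
    have "\<exists>e>0. emeasure M (ball x e) = 0" if "x \<in> K j" for x
    proof -
      have "x \<notin> A"
        using that by (force simp: K_def)
      then have "\<not> (\<forall>e>0. 0 < emeasure M (ball x e))"
        using \<open>msupp M \<subseteq> A\<close> unfolding msupp_def by blast
      then show ?thesis
        by (simp add: not_gr_zero)
    qed
    then obtain e where e: "\<And>x. x \<in> K j \<Longrightarrow> e x > 0 \<and> emeasure M (ball x (e x)) = 0"
      by metis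
    have "compact (K j)"
      using compact_Int_closed[OF assms(1) K_closed] by simp
    moreover have "K j \<subseteq> (\<Union>x\<in>K j. ball x (e x))"
      using e by force
    ultimately obtain F where F: "F \<subseteq> K j" "finite F" "K j \<subseteq> (\<Union>x\<in>F. ball x (e x))"
      using compactE_image[of "K j" "K j" "\<lambda>x. ball x (e x)"] by auto
    have "emeasure M (K j) \<le> emeasure M (\<Union>x\<in>F. ball x (e x))"
      using F(3) by (intro emeasure_mono) (auto simp: M intro!: borel_open)
    also have "\<dots> \<le> (\<Sum>x\<in>F. emeasure M (ball x (e x)))"
      using F(2) by (intro emeasure_subadditive_finite) (auto simp: M)
    also have "\<dots> = 0"
      using F(1) e by (intro sum.neutral) auto
    finally show ?thesis by simp
  qed
  moreover have "- A = (\<Union>j. K j)"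
  proof (intro equalityI subsetI)
    fix x assume "x \<in> - A"
    then obtain e where "e > 0" "ball x e \<subseteq> - A"
      using \<open>closed A\<close> by (metis open_Compl open_contains_ball)
    moreover obtain j where "inverse (Suc j) < e"
      using reals_Archimedean \<open>e > 0\<close> by blast
    ultimately have "x \<in> K j"
      unfolding K_def
    proof (intro CollectI ballI)
      fix y assume "y \<in> A"
      then have "e \<le> dist x y"
        using \<open>ball x e \<subseteq> - A\<close> by (force simp: not_less)
      then show "1 / Suc j \<le> dist x y"
        using \<open>inverse (Suc j) < e\<close> by (simp add: inverse_eq_divide)
    qed
    then show "x \<in> (\<Union>j. K j)" by blast
  qed (force simp: K_def)
  moreover have "range K \<subseteq> sets M"
    using K_closed by (auto simp: M)
  ultimately show "{x \<in> space M. x \<notin> A} \<in> null_sets M"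
    using emeasure_UN_eq_0[of M K] by (auto simp: null_sets_def sets_eq_imp_space_eq[OF M] Compl_eq)
qed simp

lemma joiningsD:
  assumes "L \<in> joinings \<mu> \<nu> T S"
  shows "prob_space L" "sets L = sets borel"
  using assms by (auto simp: joinings_def)

lemma AE_joining_marginals:
  fixes \<mu> :: "'a::metric_space measure" and \<nu> :: "'b::metric_space measure"
  assumes L: "L \<in> joinings \<mu> \<nu> T S" and "sets \<mu> = sets borel" "sets \<nu> = sets borel"
    and "AE x in \<mu>. P x" "AE y in \<nu>. Q y"
  shows "AE z in L. P (fst z) \<and> Q (snd z)"
proof -
  have "fst \<in> measurable (borel :: ('a \<times> 'b) measure) borel"
    "snd \<in> measurable (borel :: ('a \<times> 'b) measure) borel"
    by (intro borel_measurable_continuous_onI continuous_intros)+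
  then have "fst \<in> measurable L \<mu>" "snd \<in> measurable L \<nu>"
    using joiningsD(2)[OF L] assms(2,3) by (simp_all cong: measurable_cong_sets)
  moreover have "distr L \<mu> fst = \<mu>" "distr L \<nu> snd = \<nu>"
    using L by (auto simp: joinings_def)
  ultimately have "AE z in L. P (fst z)" "AE z in L. Q (snd z)"
    using assms(4,5) by (metis AE_distrD)+
  then show ?thesis by eventually_elim simp
qed

lemma distr_pair_snd:
  assumes "prob_space M" "prob_space N"
  shows "distr (M \<Otimes>\<^sub>M N) N snd = N"
proof (rule measure_eqI)
  interpret pair_prob_space M N
    using assms by (simp add: pair_prob_space_def pair_sigma_finite_def prob_space_imp_sigma_finite)
  fix B assume "B \<in> sets (distr (M \<Otimes>\<^sub>M N) N snd)"
  then have B: "B \<in> sets N" by simp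
  then have "emeasure (distr (M \<Otimes>\<^sub>M N) N snd) B = emeasure (M \<Otimes>\<^sub>M N) (space M \<times> B)"
    by (auto simp: emeasure_distr space_pair_measure dest: sets.sets_into_space
        intro!: arg_cong2[where f=emeasure])
  also have "\<dots> = emeasure N B"
    using B by (simp add: M2.emeasure_pair_measure_Times M1.emeasure_space_1)
  finally show "emeasure (distr (M \<Otimes>\<^sub>M N) N snd) B = emeasure N B" .
qed simp

lemma prod_in_joinings:
  fixes \<mu> :: "'a::metric_space measure" and \<nu> :: "'b::metric_space measure"
  assumes "compact (UNIV :: 'a set)" "compact (UNIV :: 'b set)"
    and "prob_space \<mu>" "sets \<mu> = sets borel" "prob_space \<nu>" "sets \<nu> = sets borel"
    and "T \<in> measurable \<mu> \<mu>" "distr \<mu> \<mu> T = \<mu>"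
    and "S \<in> measurable \<nu> \<nu>" "distr \<nu> \<nu> S = \<nu>"
  shows "\<mu> \<Otimes>\<^sub>M \<nu> \<in> joinings \<mu> \<nu> T S"
proof -
  have sets: "sets (\<mu> \<Otimes>\<^sub>M \<nu>) = sets (borel :: ('a \<times> 'b) measure)"
    using sets_borel_prod_compact[OF assms(1,2)] assms(4,6) by (simp cong: sets_pair_measure_cong)
  have "sigma_finite_measure (distr \<nu> \<nu> S)"
    using assms(5,10) prob_space_imp_sigma_finite by simp
  from pair_measure_distr[OF assms(7,9) this]
  have invariant: "distr (\<mu> \<Otimes>\<^sub>M \<nu>) (\<mu> \<Otimes>\<^sub>M \<nu>) (map_prod T S) = \<mu> \<Otimes>\<^sub>M \<nu>"
    using assms(8,10) by (simp add: map_prod_def split_def)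
  show ?thesis
    using sets invariant prob_space_pair[OF assms(3,5)] prob_space.distr_pair_fst[OF assms(5)]
      distr_pair_snd[OF assms(3,5)]
    by (simp add: joinings_def)
qed

lemma sets_borel_prod_closed_rectangles:
  assumes "compact (UNIV :: 'a::metric_space set)" "compact (UNIV :: 'b::metric_space set)"
  shows "sets (borel :: ('a \<times> 'b) measure) = sigma_sets UNIV {C \<times> D | C D. closed C \<and> closed D}"
proof -
  have "sets (borel :: 'a measure) = sigma_sets (space borel) (Collect closed)"
    "sets (borel :: 'b measure) = sigma_sets (space borel) (Collect closed)"
    by (subst borel_eq_closed, simp)+
  then have "sets (borel \<Otimes>\<^sub>M borel :: ('a \<times> 'b) measure) =
      sets (sigma (space borel \<times> space borel) {C \<times> D | C D. C \<in> Collect closed \<and> D \<in> Collect closed})"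
    by (intro sets_pair_eq[where Ca="{UNIV}" and Cb="{UNIV}"]) auto
  then show ?thesis
    using sets_borel_prod_compact[OF assms] by simp
qed

lemma measure_eqI_closed_rectangles:
  fixes L P :: "('a::metric_space \<times> 'b::metric_space) measure"
  assumes "compact (UNIV :: 'a set)" "compact (UNIV :: 'b set)"
    and "prob_space L" "sets L = sets borel" "prob_space P" "sets P = sets borel"
    and eq: "\<And>C D. closed C \<Longrightarrow> closed D \<Longrightarrow> measure L (C \<times> D) = measure P (C \<times> D)"
  shows "L = P"
proof (rule measure_eqI_generator_eq_countable[where A="{UNIV}" and \<Omega>=UNIV])
  interpret L: prob_space L by fact
  interpret P: prob_space P by fact
  let ?E = "{C \<times> D | C D. closed (C :: 'a set) \<and> closed (D :: 'b set)}"
  show "Int_stable ?E"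
  proof (rule Int_stableI)
    fix X Y assume "X \<in> ?E" "Y \<in> ?E"
    then obtain C D C' D' where "X = C \<times> D" "Y = C' \<times> D'"
      "closed C" "closed D" "closed C'" "closed D'"
      by blast
    moreover have "X \<inter> Y = (C \<inter> C') \<times> (D \<inter> D')"
      using calculation by (simp add: Times_Int_Times)
    ultimately show "X \<inter> Y \<in> ?E"
      by blast
  qed
  show "emeasure L X = emeasure P X" if "X \<in> ?E" for X
    using that eq by (auto simp: L.emeasure_eq_measure P.emeasure_eq_measure)
  show "sets L = sigma_sets UNIV ?E" "sets P = sigma_sets UNIV ?E"
    using assms(4,6) sets_borel_prod_closed_rectangles[OF assms(1,2)] by simp_all
  show "{UNIV} \<subseteq> ?E"
    by (auto intro!: exI[of _ UNIV])
  show "emeasure L a \<noteq> \<infinity>" for a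
    by simp
qed auto

section \<open>Cutoff functions and their anchored approximations\<close>

definition cutoff :: "real \<Rightarrow> 'a::metric_space set \<Rightarrow> 'a \<Rightarrow> real" where
  "cutoff k C x = max 0 (1 - k * infdist x C)"

lemma cutoff_nonneg: "0 \<le> cutoff k C x"
  by (simp add: cutoff_def)

lemma cutoff_le_one: "0 \<le> k \<Longrightarrow> cutoff k C x \<le> 1"
  by (simp add: cutoff_def infdist_nonneg)

lemma cutoff_lipschitz:
  assumes "0 \<le> k"
  shows "cutoff k C x \<le> cutoff k C y + k * dist x y"
proof -
  have "infdist y C \<le> infdist x C + dist x y"
    using infdist_triangle[of y C x] by (simp add: dist_commute)
  then have "k * infdist y C \<le> k * infdist x C + k * dist x y"
    using assms by (metis distrib_left mult_left_mono)
  then show ?thesis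
    using assms unfolding cutoff_def by auto
qed

lemma tendsto_cutoff_indicator:
  assumes "closed C" "C \<noteq> {}"
  shows "(\<lambda>j. cutoff (Suc j) C x) \<longlonglongrightarrow> indicator C x"
proof (cases "x \<in> C")
  case True
  then show ?thesis by (simp add: cutoff_def)
next
  case False
  then have "infdist x C > 0"
    using infdist_pos_not_in_closed[OF assms] by simp
  then obtain N where N: "inverse (Suc N) < infdist x C"
    using reals_Archimedean by blast
  have "cutoff (Suc j) C x = 0" if "N \<le> j" for j
  proof -
    have "inverse (real (Suc j)) \<le> inverse (Suc N)"
      using that by (intro le_imp_inverse_le) auto
    then have "inverse (Suc j) < infdist x C"
      using N by linarith
    then show ?thesis
      by (simp add: cutoff_def field_simps)
  qed
  then have "eventually (\<lambda>j. cutoff (Suc j) C x = 0) sequentially"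
    using eventually_sequentially by blast
  then show ?thesis
    using False by (simp add: tendsto_eventually)
qed

text \<open>With c r = g (a r) and d r = dist x (a r) this is the McShane extension of a k-Lipschitz
  g \<le> 1 from the first R anchors; it sees x only through its distances to the anchors.\<close>
primrec anchored_min :: "real \<Rightarrow> (nat \<Rightarrow> real) \<Rightarrow> nat \<Rightarrow> (nat \<Rightarrow> real) \<Rightarrow> real" where
  "anchored_min k c 0 d = 1"
| "anchored_min k c (Suc R) d = min (anchored_min k c R d) (c R + k * d R)"

lemma anchored_min_cong:
  "(\<And>r. r < R \<Longrightarrow> d r = d' r) \<Longrightarrow> anchored_min k c R d = anchored_min k c R d'"
  by (induction R) auto

lemma anchored_min_le_one: "anchored_min k c R d \<le> 1"
  by (induction R) auto

lemma anchored_min_nonneg: "(\<And>r. r < R \<Longrightarrow> 0 \<le> c r + k * d r) \<Longrightarrow> 0 \<le> anchored_min k c R d"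
  by (induction R) auto

lemma anchored_min_le: "r < R \<Longrightarrow> anchored_min k c R d \<le> c r + k * d r"
  by (induction R) (auto simp: less_Suc_eq)

lemma anchored_min_greatest:
  "y \<le> 1 \<Longrightarrow> (\<And>r. r < R \<Longrightarrow> y \<le> c r + k * d r) \<Longrightarrow> y \<le> anchored_min k c R d"
  by (induction R) auto

lemma anchored_min_lipschitz:
  assumes "0 \<le> k" "0 \<le> \<delta>" "\<And>r. r < R \<Longrightarrow> \<bar>d r - d' r\<bar> \<le> \<delta>"
  shows "\<bar>anchored_min k c R d - anchored_min k c R d'\<bar> \<le> k * \<delta>"
  using assms(3)
proof (induction R)
  case 0
  then show ?case using assms(1,2) by simp
next
  case (Suc R)
  have new: "\<bar>(c R + k * d R) - (c R + k * d' R)\<bar> \<le> k * \<delta>"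
    using assms(1) Suc.prems[of R] by (simp flip: right_diff_distrib add: abs_mult mult_left_mono)
  have old: "\<bar>anchored_min k c R d - anchored_min k c R d'\<bar> \<le> k * \<delta>"
    using Suc by simp
  have "\<bar>min u v - min u' v'\<bar> \<le> max \<bar>u - u'\<bar> \<bar>v - v'\<bar>" for u v u' v' :: real
    by (simp add: abs_if min_def max_def)
  then show ?case
    using order_trans[OF _ max.boundedI[OF old new]] by simp
qed

lemma borel_measurable_anchored_min:
  "(\<And>r. r < R \<Longrightarrow> (\<lambda>x. d x r) \<in> borel_measurable M) \<Longrightarrow>
    (\<lambda>x. anchored_min k c R (d x)) \<in> borel_measurable M"
  by (induction R) auto

lemma tendsto_anchored_min:
  fixes g :: "'a::metric_space \<Rightarrow> real"
  assumes "0 \<le> k" and g_lip: "\<And>x y. g x \<le> g y + k * dist x y" and "\<And>x. g x \<le> 1"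
    and "x \<in> closure (range a)"
  shows "(\<lambda>R. anchored_min k (\<lambda>r. g (a r)) R (\<lambda>r. dist x (a r))) \<longlonglongrightarrow> g x"
proof (rule order_tendstoI)
  have lower: "g x \<le> anchored_min k (\<lambda>r. g (a r)) R (\<lambda>r. dist x (a r))" for R
    using assms(3) g_lip by (intro anchored_min_greatest) auto
  show "eventually (\<lambda>R. y < anchored_min k (\<lambda>r. g (a r)) R (\<lambda>r. dist x (a r))) sequentially"
    if "y < g x" for y
    by (intro always_eventually allI less_le_trans[OF that lower])
  show "eventually (\<lambda>R. anchored_min k (\<lambda>r. g (a r)) R (\<lambda>r. dist x (a r)) < y) sequentially"
    if "g x < y" for y
  proof -
    define \<epsilon> where "\<epsilon> = (y - g x) / (2 * k + 1)"
    have "0 < \<epsilon>"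
      using that assms(1) by (simp add: \<epsilon>_def)
    then obtain r where r: "dist x (a r) < \<epsilon>"
      using assms(4) unfolding closure_approachable by (metis dist_commute rangeE)
    have "2 * k * dist x (a r) \<le> 2 * k * \<epsilon>"
      using r assms(1) by (intro mult_left_mono) auto
    also have "\<dots> < (2 * k + 1) * \<epsilon>"
      using \<open>0 < \<epsilon>\<close> by simp
    also have "\<dots> = y - g x"
      using assms(1) by (simp add: \<epsilon>_def)
    finally have "2 * k * dist x (a r) < y - g x" .
    moreover have "g (a r) \<le> g x + k * dist x (a r)"
      using g_lip[of "a r" x] by (simp add: dist_commute)
    ultimately have "anchored_min k (\<lambda>r. g (a r)) R (\<lambda>r. dist x (a r)) < y" if "r < R" for R
      using anchored_min_le[OF that, of k "\<lambda>r. g (a r)" "\<lambda>r. dist x (a r)"] by linarith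
    then show ?thesis
      unfolding eventually_sequentially by (metis Suc_le_eq)
  qed
qed

definition anchored_cutoff :: "real \<Rightarrow> 'a::metric_space set \<Rightarrow> (nat \<Rightarrow> 'a) \<Rightarrow> nat \<Rightarrow> 'a \<Rightarrow> real" where
  "anchored_cutoff k C a R x = anchored_min k (\<lambda>r. cutoff k C (a r)) R (\<lambda>r. dist x (a r))"

lemma anchored_cutoff_nonneg: "0 \<le> k \<Longrightarrow> 0 \<le> anchored_cutoff k C a R x"
  unfolding anchored_cutoff_def by (intro anchored_min_nonneg) (simp add: cutoff_nonneg)

lemma anchored_cutoff_le_one: "anchored_cutoff k C a R x \<le> 1"
  by (simp add: anchored_cutoff_def anchored_min_le_one)

lemma integral_bounded_convergence:
  assumes "prob_space M" "\<And>n. f n \<in> borel_measurable M" "g \<in> borel_measurable M"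
    and "\<And>n x. \<bar>f n x\<bar> \<le> (1::real)" and "AE x in M. (\<lambda>n. f n x) \<longlonglongrightarrow> g x"
  shows "(\<lambda>n. \<integral>x. f n x \<partial>M) \<longlonglongrightarrow> (\<integral>x. g x \<partial>M)"
proof (rule integral_dominated_convergence[where w="\<lambda>_. 1"])
  interpret prob_space M by fact
  show "integrable M (\<lambda>_. 1::real)" by simp
qed (use assms in auto)

lemma unit_interval_mult_bound: "0 \<le> u \<Longrightarrow> u \<le> 1 \<Longrightarrow> 0 \<le> v \<Longrightarrow> v \<le> 1 \<Longrightarrow> \<bar>u * v\<bar> \<le> (1::real)"
  by (simp add: abs_mult mult_le_one)

lemma borel_measurable_cutoff_product:
  assumes "sets M = sets (borel :: ('a::metric_space \<times> 'b::metric_space) measure)"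
  shows "(\<lambda>z. cutoff k C (fst z) * cutoff k D (snd z)) \<in> borel_measurable M"
proof -
  have "(\<lambda>z::'a \<times> 'b. cutoff k C (fst z) * cutoff k D (snd z)) \<in> borel_measurable borel"
    unfolding cutoff_def by (intro borel_measurable_continuous_onI continuous_intros)
  then show ?thesis
    using assms by (simp cong: measurable_cong_sets)
qed

lemma borel_measurable_anchored_cutoff_product:
  assumes "sets M = sets (borel :: ('a::metric_space \<times> 'b::metric_space) measure)"
  shows "(\<lambda>z. anchored_cutoff k C a R (fst z) * anchored_cutoff k D b R (snd z)) \<in> borel_measurable M"
proof -
  have "(\<lambda>z::'a \<times> 'b. dist (fst z) (a r)) \<in> borel_measurable borel"
    "(\<lambda>z::'a \<times> 'b. dist (snd z) (b r)) \<in> borel_measurable borel" for r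
    by (intro borel_measurable_continuous_onI continuous_intros)+
  then have "(\<lambda>z::'a \<times> 'b. anchored_cutoff k C a R (fst z) * anchored_cutoff k D b R (snd z))
      \<in> borel_measurable borel"
    unfolding anchored_cutoff_def by (intro borel_measurable_times borel_measurable_anchored_min)
  then show ?thesis
    using assms by (simp cong: measurable_cong_sets)
qed

lemma tendsto_integral_anchored_cutoff:
  fixes M :: "('a::metric_space \<times> 'b::metric_space) measure"
  assumes "prob_space M" "sets M = sets borel" "0 \<le> k"
    and "AE z in M. fst z \<in> closure (range a) \<and> snd z \<in> closure (range b)"
  shows "(\<lambda>R. \<integral>z. anchored_cutoff k C a R (fst z) * anchored_cutoff k D b R (snd z) \<partial>M)
    \<longlonglongrightarrow> (\<integral>z. cutoff k C (fst z) * cutoff k D (snd z) \<partial>M)"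
proof (rule integral_bounded_convergence[OF assms(1)])
  show "(\<lambda>z. anchored_cutoff k C a R (fst z) * anchored_cutoff k D b R (snd z)) \<in> borel_measurable M" for R
    using assms(2) by (rule borel_measurable_anchored_cutoff_product)
  show "(\<lambda>z. cutoff k C (fst z) * cutoff k D (snd z)) \<in> borel_measurable M"
    using assms(2) by (rule borel_measurable_cutoff_product)
  show "\<bar>anchored_cutoff k C a R (fst z) * anchored_cutoff k D b R (snd z)\<bar> \<le> 1" for R z
    using assms(3) by (intro unit_interval_mult_bound anchored_cutoff_nonneg anchored_cutoff_le_one)
  show "AE z in M. (\<lambda>R. anchored_cutoff k C a R (fst z) * anchored_cutoff k D b R (snd z))
      \<longlonglongrightarrow> cutoff k C (fst z) * cutoff k D (snd z)"
    using assms(4) unfolding anchored_cutoff_def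
    by eventually_elim
      (use assms(3) in \<open>auto intro!: tendsto_mult tendsto_anchored_min cutoff_lipschitz cutoff_le_one\<close>)
qed

lemma tendsto_integral_cutoff_measure:
  fixes M :: "('a::metric_space \<times> 'b::metric_space) measure"
  assumes "prob_space M" "sets M = sets borel"
    and "closed C" "C \<noteq> {}" "closed D" "D \<noteq> {}"
  shows "(\<lambda>j. \<integral>z. cutoff (Suc j) C (fst z) * cutoff (Suc j) D (snd z) \<partial>M) \<longlonglongrightarrow> measure M (C \<times> D)"
proof -
  interpret prob_space M by fact
  have CD: "C \<times> D \<in> sets M"
    using assms(2,3,5) by (simp add: borel_closed closed_Times)
  have "(\<lambda>j. \<integral>z. cutoff (Suc j) C (fst z) * cutoff (Suc j) D (snd z) \<partial>M)
      \<longlonglongrightarrow> (\<integral>z. indicator (C \<times> D) z \<partial>M)"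
  proof (rule integral_bounded_convergence[OF assms(1)])
    show "(\<lambda>z. cutoff (Suc j) C (fst z) * cutoff (Suc j) D (snd z)) \<in> borel_measurable M" for j
      using assms(2) by (rule borel_measurable_cutoff_product)
    show "indicator (C \<times> D) \<in> borel_measurable M"
      using CD by (rule borel_measurable_indicator)
    show "\<bar>cutoff (Suc j) C (fst z) * cutoff (Suc j) D (snd z)\<bar> \<le> 1" for j z
      by (intro unit_interval_mult_bound cutoff_nonneg cutoff_le_one) simp_all
    show "AE z in M. (\<lambda>j. cutoff (Suc j) C (fst z) * cutoff (Suc j) D (snd z)) \<longlonglongrightarrow> indicator (C \<times> D) z"
      using tendsto_mult[OF tendsto_cutoff_indicator[OF assms(3,4)] tendsto_cutoff_indicator[OF assms(5,6)]]
      by (auto simp: indicator_times split: prod.splits)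
  qed
  then show ?thesis
    using CD by (simp add: integral_indicator)
qed

lemma measure_eqI_cutoff_integrals:
  fixes L P :: "('a::metric_space \<times> 'b::metric_space) measure"
  assumes "compact (UNIV :: 'a set)" "compact (UNIV :: 'b set)"
    and L: "prob_space L" "sets L = sets borel"
    and P: "prob_space P" "sets P = sets borel"
    and eq: "\<And>j C D. closed C \<Longrightarrow> C \<noteq> {} \<Longrightarrow> closed D \<Longrightarrow> D \<noteq> {} \<Longrightarrow>
      (\<integral>z. cutoff (Suc j) C (fst z) * cutoff (Suc j) D (snd z) \<partial>L) =
      (\<integral>z. cutoff (Suc j) C (fst z) * cutoff (Suc j) D (snd z) \<partial>P)"
  shows "L = P"
proof (rule measure_eqI_closed_rectangles[OF assms(1,2) L P])
  fix C :: "'a set" and D :: "'b set"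
  assume "closed C" "closed D"
  show "measure L (C \<times> D) = measure P (C \<times> D)"
  proof (cases "C = {} \<or> D = {}")
    case False
    then have "(\<lambda>j. \<integral>z. cutoff (Suc j) C (fst z) * cutoff (Suc j) D (snd z) \<partial>P)
        \<longlonglongrightarrow> measure L (C \<times> D)"
      using tendsto_integral_cutoff_measure[OF L \<open>closed C\<close> _ \<open>closed D\<close>] eq \<open>closed C\<close> \<open>closed D\<close>
      by simp
    then show ?thesis
      using False tendsto_integral_cutoff_measure[OF P \<open>closed C\<close> _ \<open>closed D\<close>]
      by (blast intro: LIMSEQ_unique)
  qed auto
qed

lemma anchored_cutoff_integrals_separate:
  fixes L P :: "('a::metric_space \<times> 'b::metric_space) measure"
  assumes "compact (UNIV :: 'a set)" "compact (UNIV :: 'b set)"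
    and L: "prob_space L" "sets L = sets borel"
    and P: "prob_space P" "sets P = sets borel"
    and "AE z in L. fst z \<in> closure (range a) \<and> snd z \<in> closure (range b)"
    and "AE z in P. fst z \<in> closure (range a) \<and> snd z \<in> closure (range b)"
    and "L \<noteq> P"
  obtains k R C D where "1 \<le> k" "1 \<le> R"
    "(\<integral>z. anchored_cutoff k C a R (fst z) * anchored_cutoff k D b R (snd z) \<partial>L) \<noteq>
     (\<integral>z. anchored_cutoff k C a R (fst z) * anchored_cutoff k D b R (snd z) \<partial>P)"
proof -
  let ?I = "\<lambda>M k R C D. \<integral>z. anchored_cutoff k C a R (fst z) * anchored_cutoff k D b R (snd z) \<partial>M"
  have lim: "(\<lambda>R. ?I M (Suc j) (Suc R) C D)
      \<longlonglongrightarrow> (\<integral>z. cutoff (Suc j) C (fst z) * cutoff (Suc j) D (snd z) \<partial>M)"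
    if "prob_space M" "sets M = sets borel"
      "AE z in M. fst z \<in> closure (range a) \<and> snd z \<in> closure (range b)" for M j C D
    using LIMSEQ_Suc[OF tendsto_integral_anchored_cutoff[OF that(1,2) _ that(3)]] by simp
  have "L = P" if eq: "\<And>k R C D. 1 \<le> k \<Longrightarrow> 1 \<le> R \<Longrightarrow> ?I L k R C D = ?I P k R C D"
  proof (rule measure_eqI_cutoff_integrals[OF assms(1,2) L P])
    fix j C D
    have "(\<lambda>R. ?I P (Suc j) (Suc R) C D)
        \<longlonglongrightarrow> (\<integral>z. cutoff (Suc j) C (fst z) * cutoff (Suc j) D (snd z) \<partial>L)"
      using lim[OF L assms(7)] eq by simp
    then show "(\<integral>z. cutoff (Suc j) C (fst z) * cutoff (Suc j) D (snd z) \<partial>L) =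
        (\<integral>z. cutoff (Suc j) C (fst z) * cutoff (Suc j) D (snd z) \<partial>P)"
      using lim[OF P assms(8)] by (rule LIMSEQ_unique)
  qed
  then show thesis
    using that \<open>L \<noteq> P\<close> by blast
qed

section \<open>Test functions on anchored arrays\<close>

lemma finite_arr_idx: "finite (arr_idx n m R)"
proof -
  have "arr_idx n m R \<subseteq>
      (\<lambda>(i, j, p, q). XD i j p q) ` ({..<n} \<times> {..<n} \<times> {..<m} \<times> {..<m})
    \<union> (\<lambda>(i, p, r). XA i p r) ` ({..<n} \<times> {..<m} \<times> {..<R})
    \<union> (\<lambda>(i, j, p, q). YD i j p q) ` ({..<n} \<times> {..<n} \<times> {..<m} \<times> {..<m})
    \<union> (\<lambda>(i, p, r). YA i p r) ` ({..<n} \<times> {..<m} \<times> {..<R})"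
    unfolding arr_idx_def by (auto simp: image_iff)
  then show ?thesis
    by (rule finite_subset) auto
qed

lemma arr_dist_nonneg: "0 \<le> arr_dist n m R f g"
  by (simp add: arr_dist_def)

lemma coord_le_arr_dist:
  assumes "i \<in> arr_idx n m R"
  shows "\<bar>f i - g i\<bar> \<le> arr_dist n m R f g"
proof -
  have "\<bar>f i - g i\<bar> \<le> L2_set (\<lambda>k. \<bar>f k - g k\<bar>) (arr_idx n m R)"
    by (rule member_le_L2_set[OF finite_arr_idx assms])
  then show ?thesis
    by (simp add: arr_dist_def L2_set_def)
qed

lemma arr_idx_1_1_anchors: "r < R \<Longrightarrow> XA 0 0 r \<in> arr_idx 1 1 R" "r < R \<Longrightarrow> YA 0 0 r \<in> arr_idx 1 1 R"
  by (auto simp: arr_idx_def)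

lemma anch_arr_1_1_anchors:
  assumes "r < R"
  shows "anch_arr 1 1 R T S a b (\<lambda>_. z) (XA 0 0 r) = dist (fst z) (a r)"
    and "anch_arr 1 1 R T S a b (\<lambda>_. z) (YA 0 0 r) = dist (snd z) (b r)"
  using arr_idx_1_1_anchors[OF assms] by (auto simp: anch_arr_def)

text \<open>The factor 1 / (2 * k) makes it 1-Lipschitz for arr_dist, and max 0 keeps it in [0, 1] off
  the cube.\<close>
definition array_test :: "real \<Rightarrow> 'a::metric_space set \<Rightarrow> 'b::metric_space set
    \<Rightarrow> (nat \<Rightarrow> 'a) \<Rightarrow> (nat \<Rightarrow> 'b) \<Rightarrow> nat \<Rightarrow> (aidx \<Rightarrow> real) \<Rightarrow> real" where
  "array_test k C D a b R f =
     max 0 (anchored_min k (\<lambda>r. cutoff k C (a r)) R (\<lambda>r. f (XA 0 0 r))) *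
     max 0 (anchored_min k (\<lambda>r. cutoff k D (b r)) R (\<lambda>r. f (YA 0 0 r))) / (2 * k)"

lemma array_test_anch_arr:
  assumes "0 \<le> k"
  shows "array_test k C D a b R (anch_arr 1 1 R T S a b (\<lambda>_. z)) =
    anchored_cutoff k C a R (fst z) * anchored_cutoff k D b R (snd z) / (2 * k)"
proof -
  have "anchored_min k c R (\<lambda>r. anch_arr 1 1 R T S a b (\<lambda>_. z) (XA 0 0 r)) =
      anchored_min k c R (\<lambda>r. dist (fst z) (a r))"
    "anchored_min k c' R (\<lambda>r. anch_arr 1 1 R T S a b (\<lambda>_. z) (YA 0 0 r)) =
      anchored_min k c' R (\<lambda>r. dist (snd z) (b r))" for c c'
    by (rule anchored_min_cong, erule anch_arr_1_1_anchors)+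
  moreover have "0 \<le> anchored_cutoff k C a R (fst z)" "0 \<le> anchored_cutoff k D b R (snd z)"
    using anchored_cutoff_nonneg[OF assms] by blast+
  ultimately show ?thesis
    by (simp add: array_test_def anchored_cutoff_def max.absorb2)
qed

lemma array_test_abs_le_one:
  assumes "1 \<le> k"
  shows "\<bar>array_test k C D a b R f\<bar> \<le> 1"
proof -
  let ?u = "max 0 (anchored_min k (\<lambda>r. cutoff k C (a r)) R (\<lambda>r. f (XA 0 0 r)))"
  let ?v = "max 0 (anchored_min k (\<lambda>r. cutoff k D (b r)) R (\<lambda>r. f (YA 0 0 r)))"
  have "\<bar>?u * ?v\<bar> \<le> 1"
    by (intro unit_interval_mult_bound) (auto simp: anchored_min_le_one)
  then show ?thesis
    using assms by (simp add: array_test_def abs_mult divide_le_eq)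
qed

lemma unit_interval_mult_diff_le:
  fixes u v u' v' :: real
  assumes "0 \<le> u" "u \<le> 1" "0 \<le> v'" "v' \<le> 1"
  shows "\<bar>u * v - u' * v'\<bar> \<le> \<bar>v - v'\<bar> + \<bar>u - u'\<bar>"
proof -
  have "u * v - u' * v' = u * (v - v') + (u - u') * v'"
    by (simp add: algebra_simps)
  also have "\<bar>\<dots>\<bar> \<le> 1 * \<bar>v - v'\<bar> + \<bar>u - u'\<bar> * 1"
    using assms by (intro abs_triangle_ineq[THEN order_trans] add_mono)
      (auto simp: abs_mult intro: mult_left_le_one_le mult_right_le_one_le)
  finally show ?thesis by simp
qed

lemma array_test_lipschitz:
  assumes "0 < k"
  shows "\<bar>array_test k C D a b R f - array_test k C D a b R g\<bar> \<le> arr_dist 1 1 R f g"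
proof -
  define u where "u c sel h = max 0 (anchored_min k c R (\<lambda>r. h (sel r)))"
    for c and sel :: "nat \<Rightarrow> aidx" and h :: "aidx \<Rightarrow> real"
  have u_bounds: "0 \<le> u c sel h" "u c sel h \<le> 1" for c sel h
    by (auto simp: u_def anchored_min_le_one)
  have u_lip: "\<bar>u c sel f - u c sel g\<bar> \<le> k * arr_dist 1 1 R f g"
    if "\<And>r. r < R \<Longrightarrow> sel r \<in> arr_idx 1 1 R" for c sel
  proof -
    have "\<bar>max 0 x - max 0 y\<bar> \<le> \<bar>x - y\<bar>" for x y :: real
      by (simp add: abs_if max_def)
    moreover have "\<bar>anchored_min k c R (\<lambda>r. f (sel r)) - anchored_min k c R (\<lambda>r. g (sel r))\<bar>
        \<le> k * arr_dist 1 1 R f g"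
      using assms that by (intro anchored_min_lipschitz coord_le_arr_dist arr_dist_nonneg) auto
    ultimately show ?thesis
      unfolding u_def by (meson order_trans)
  qed
  let ?uC = "u (\<lambda>r. cutoff k C (a r)) (\<lambda>r. XA 0 0 r)"
  let ?uD = "u (\<lambda>r. cutoff k D (b r)) (\<lambda>r. YA 0 0 r)"
  have "\<bar>?uC f * ?uD f - ?uC g * ?uD g\<bar> \<le> \<bar>?uD f - ?uD g\<bar> + \<bar>?uC f - ?uC g\<bar>"
    using u_bounds by (intro unit_interval_mult_diff_le)
  also have "\<dots> \<le> 2 * k * arr_dist 1 1 R f g"
  proof -
    have "\<bar>?uC f - ?uC g\<bar> \<le> k * arr_dist 1 1 R f g" "\<bar>?uD f - ?uD g\<bar> \<le> k * arr_dist 1 1 R f g"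
      by (rule u_lip, erule arr_idx_1_1_anchors)+
    then show ?thesis by linarith
  qed
  finally have "\<bar>?uC f * ?uD f - ?uC g * ?uD g\<bar> / (2 * k) \<le> arr_dist 1 1 R f g"
    using assms by (simp add: divide_le_eq mult.commute mult.left_commute)
  then show ?thesis
    using assms by (simp add: array_test_def u_def abs_divide flip: diff_divide_distrib)
qed

lemma array_test_measurable: "array_test k C D a b R \<in> borel_measurable (arr_space 1 1 R)"
proof -
  have "(\<lambda>f. f (XA 0 0 r)) \<in> borel_measurable (arr_space 1 1 R)"
    "(\<lambda>f. f (YA 0 0 r)) \<in> borel_measurable (arr_space 1 1 R)" if "r < R" for r
    using arr_idx_1_1_anchors[OF that] unfolding arr_space_def
    by (auto intro: measurable_component_singleton)
  then show ?thesis
    unfolding array_test_def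
    by (intro borel_measurable_divide borel_measurable_times borel_measurable_max
        borel_measurable_const borel_measurable_anchored_min) auto
qed

lemma measurable_anch_arr_1_1:
  fixes L :: "('a::metric_space \<times> 'b::metric_space) measure"
  assumes "sets L = sets borel"
  shows "(\<lambda>z. anch_arr 1 1 R T S a b (\<lambda>_. z)) \<in> measurable L (arr_space 1 1 R)"
  unfolding anch_arr_def arr_space_def measurable_cong_sets[OF assms refl]
  by (rule measurable_restrict)
    (auto simp: arr_idx_def intro!: borel_measurable_continuous_onI continuous_intros)

lemma Phi_1_1_eq_distr:
  fixes L :: "('a::metric_space \<times> 'b::metric_space) measure"
  assumes "prob_space L" "sets L = sets borel"
  shows "Phi 1 1 R T S a b L = distr L (arr_space 1 1 R) (\<lambda>z. anch_arr 1 1 R T S a b (\<lambda>_. z))"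
proof -
  let ?G = "\<lambda>z. anch_arr 1 1 R T S a b (\<lambda>_. z)"
  have G0: "anch_arr 1 1 R T S a b w = ?G (w 0)" for w
    unfolding anch_arr_def by (rule restrict_ext) (auto simp: arr_idx_def)
  have "Phi 1 1 R T S a b L = distr (PiM {..<1::nat} (\<lambda>_. L)) (arr_space 1 1 R) (?G \<circ> (\<lambda>w. w 0))"
    unfolding Phi_def comp_def by (rule distr_cong[OF refl refl]) (rule G0)
  also have "\<dots> = distr (distr (PiM {..<1::nat} (\<lambda>_. L)) L (\<lambda>w. w 0)) (arr_space 1 1 R) ?G"
    using measurable_anch_arr_1_1[OF assms(2)]
    by (intro distr_distr[symmetric]) (auto intro: measurable_component_singleton)
  also have "distr (PiM {..<1::nat} (\<lambda>_. L)) L (\<lambda>w. w 0) = L"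
    using distr_PiM_component[of "{..<1::nat}" "\<lambda>_. L" 0] assms(1) by simp
  finally show ?thesis .
qed

lemma integral_array_test_Phi_1_1:
  fixes L :: "('a::metric_space \<times> 'b::metric_space) measure"
  assumes "prob_space L" "sets L = sets borel" "0 \<le> k"
  shows "(\<integral>f. array_test k C D a b R f \<partial>Phi 1 1 R T S a b L) =
    (\<integral>z. anchored_cutoff k C a R (fst z) * anchored_cutoff k D b R (snd z) \<partial>L) / (2 * k)"
proof -
  have "(\<integral>f. array_test k C D a b R f \<partial>Phi 1 1 R T S a b L) =
      (\<integral>z. array_test k C D a b R (anch_arr 1 1 R T S a b (\<lambda>_. z)) \<partial>L)"
    unfolding Phi_1_1_eq_distr[OF assms(1,2)]
    by (rule integral_distr[OF measurable_anch_arr_1_1[OF assms(2)] array_test_measurable])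
  also have "\<dots> = (\<integral>z. anchored_cutoff k C a R (fst z) * anchored_cutoff k D b R (snd z) / (2 * k) \<partial>L)"
    by (simp only: array_test_anch_arr[OF assms(3)])
  finally show ?thesis
    by simp
qed

lemma anch_arr_in_arr_cube:
  fixes T :: "'a::metric_space \<Rightarrow> 'a" and S :: "'b::metric_space \<Rightarrow> 'b"
  assumes "compact (UNIV :: 'a set)" "compact (UNIV :: 'b set)"
  shows "anch_arr n m R T S a b w \<in> arr_cube TYPE('a) TYPE('b) n m R"
proof -
  have "dist x y \<le> diameter (UNIV :: 'a set)" for x y :: 'a
    using assms(1) by (intro diameter_bounded_bound compact_imp_bounded) auto
  moreover have "dist x y \<le> diameter (UNIV :: 'b set)" for x y :: 'b
    using assms(2) by (intro diameter_bounded_bound compact_imp_bounded) auto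
  ultimately show ?thesis
    unfolding arr_cube_def anch_arr_def by (auto split: aidx.split)
qed

lemma arr_cube_in_sets: "arr_cube TYPE('a::metric_space) TYPE('b::metric_space) n m R \<in> sets (arr_space n m R)"
proof -
  define h where "h k = (case k of XD _ _ _ _ \<Rightarrow> diameter (UNIV :: 'a set)
                                 | XA _ _ _ \<Rightarrow> diameter (UNIV :: 'a set)
                                 | YD _ _ _ _ \<Rightarrow> diameter (UNIV :: 'b set)
                                 | YA _ _ _ \<Rightarrow> diameter (UNIV :: 'b set))" for k
  have "arr_cube TYPE('a) TYPE('b) n m R = PiE (arr_idx n m R) (\<lambda>k. {0..h k})"
    unfolding arr_cube_def h_def by (auto simp: PiE_iff extensional_def)
  then show ?thesis
    unfolding arr_space_def by (simp add: sets_PiM_I_finite finite_arr_idx)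
qed

lemma arr_dist_le_on_arr_cube:
  assumes "f \<in> arr_cube TYPE('a::metric_space) TYPE('b::metric_space) n m R"
    and "g \<in> arr_cube TYPE('a) TYPE('b) n m R"
  shows "arr_dist n m R f g \<le>
    card (arr_idx n m R) * (\<bar>diameter (UNIV :: 'a set)\<bar> + \<bar>diameter (UNIV :: 'b set)\<bar>)"
proof -
  have "\<bar>f k - g k\<bar> \<le> \<bar>diameter (UNIV :: 'a set)\<bar> + \<bar>diameter (UNIV :: 'b set)\<bar>"
    if "k \<in> arr_idx n m R" for k
    using assms that unfolding arr_cube_def by (cases k) (fastforce+)
  then have "(\<Sum>k\<in>arr_idx n m R. \<bar>f k - g k\<bar>) \<le>
      card (arr_idx n m R) * (\<bar>diameter (UNIV :: 'a set)\<bar> + \<bar>diameter (UNIV :: 'b set)\<bar>)"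
    by (intro sum_bounded_above) auto
  moreover have "arr_dist n m R f g \<le> (\<Sum>k\<in>arr_idx n m R. \<bar>f k - g k\<bar>)"
    unfolding arr_dist_def by (rule L2_set_le_sum_abs)
  ultimately show ?thesis by linarith
qed

section \<open>Lipschitz test functions and the Wasserstein distance\<close>

lemma borel_measurable_arr_dist:
  "(\<lambda>w. arr_dist n m R (fst w) (snd w)) \<in> borel_measurable (arr_space n m R \<Otimes>\<^sub>M arr_space n m R)"
proof -
  have "(\<lambda>w. fst w k) \<in> borel_measurable (arr_space n m R \<Otimes>\<^sub>M arr_space n m R)"
    "(\<lambda>w. snd w k) \<in> borel_measurable (arr_space n m R \<Otimes>\<^sub>M arr_space n m R)"
    if "k \<in> arr_idx n m R" for k
    using that unfolding arr_space_def
    by (auto intro!: measurable_compose[OF measurable_fst] measurable_compose[OF measurable_snd]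
        measurable_component_singleton)
  then show ?thesis
    unfolding arr_dist_def L2_set_def by (auto intro!: borel_measurable_sqrt borel_measurable_sum)
qed

lemma prod_in_arr_couplings:
  assumes "prob_space P" "sets P = sets (arr_space n m R)"
    and "prob_space Q" "sets Q = sets (arr_space n m R)"
  shows "P \<Otimes>\<^sub>M Q \<in> arr_couplings n m R P Q"
proof -
  have "distr (P \<Otimes>\<^sub>M Q) (arr_space n m R) fst = distr (P \<Otimes>\<^sub>M Q) P fst"
    "distr (P \<Otimes>\<^sub>M Q) (arr_space n m R) snd = distr (P \<Otimes>\<^sub>M Q) Q snd"
    using assms(2,4) by (auto intro: distr_cong)
  then show ?thesis
    using assms prob_space_pair[OF assms(1,3)] prob_space.distr_pair_fst[OF assms(3)]
      distr_pair_snd[OF assms(1,3)]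
    by (simp add: arr_couplings_def cong: sets_pair_measure_cong)
qed

lemma coupling_integral_bounds:
  assumes \<pi>: "\<pi> \<in> arr_couplings n m R P Q"
    and "AE f in P. f \<in> K" "AE f in Q. f \<in> K" "K \<in> sets (arr_space n m R)"
    and K_bound: "\<And>f g. f \<in> K \<Longrightarrow> g \<in> K \<Longrightarrow> arr_dist n m R f g \<le> B"
    and \<psi>: "\<psi> \<in> borel_measurable (arr_space n m R)" "\<And>f. \<bar>\<psi> f\<bar> \<le> c"
    and lip: "\<And>f g. \<bar>\<psi> f - \<psi> g\<bar> \<le> arr_dist n m R f g"
  shows "\<bar>(\<integral>f. \<psi> f \<partial>P) - (\<integral>f. \<psi> f \<partial>Q)\<bar> \<le> (\<integral>w. arr_dist n m R (fst w) (snd w) \<partial>\<pi>)"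
    and "(\<integral>w. arr_dist n m R (fst w) (snd w) \<partial>\<pi>) \<le> B"
proof -
  let ?A = "arr_space n m R"
  have sets_\<pi>: "sets \<pi> = sets (?A \<Otimes>\<^sub>M ?A)" and "prob_space \<pi>"
    and P: "distr \<pi> ?A fst = P" and Q: "distr \<pi> ?A snd = Q"
    using \<pi> by (auto simp: arr_couplings_def)
  interpret prob_space \<pi> by fact
  have fst: "fst \<in> measurable \<pi> ?A" and snd: "snd \<in> measurable \<pi> ?A"
    by (simp_all add: measurable_cong_sets[OF sets_\<pi> refl])
  have "AE w in \<pi>. fst w \<in> K" "AE w in \<pi>. snd w \<in> K"
    using AE_distrD[OF fst] AE_distrD[OF snd] assms(2,3) unfolding P Q by blast+
  then have "AE w in \<pi>. fst w \<in> K \<and> snd w \<in> K"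
    by (simp add: AE_conj_iff)
  then have dist_bound: "AE w in \<pi>. arr_dist n m R (fst w) (snd w) \<le> B"
    by eventually_elim (use K_bound in auto)
  have "(\<lambda>w. arr_dist n m R (fst w) (snd w)) \<in> borel_measurable \<pi>"
    using borel_measurable_arr_dist by (simp add: measurable_cong_sets[OF sets_\<pi> refl])
  then have int_dist: "integrable \<pi> (\<lambda>w. arr_dist n m R (fst w) (snd w))"
    using dist_bound by (intro integrable_const_bound[where B=B]) (auto simp: arr_dist_nonneg)
  have int_\<psi>: "integrable \<pi> (\<lambda>w. \<psi> (fst w))" "integrable \<pi> (\<lambda>w. \<psi> (snd w))"
    using \<psi> measurable_compose[OF fst \<psi>(1)] measurable_compose[OF snd \<psi>(1)]
    by (auto intro!: integrable_const_bound[where B=c])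
  have "(\<integral>f. \<psi> f \<partial>P) - (\<integral>f. \<psi> f \<partial>Q) = (\<integral>w. \<psi> (fst w) - \<psi> (snd w) \<partial>\<pi>)"
    unfolding P[symmetric] Q[symmetric] using int_\<psi>
    by (simp add: integral_distr[OF fst \<psi>(1)] integral_distr[OF snd \<psi>(1)])
  also have "\<bar>\<dots>\<bar> \<le> (\<integral>w. \<bar>\<psi> (fst w) - \<psi> (snd w)\<bar> \<partial>\<pi>)"
    using integral_norm_bound[of \<pi> "\<lambda>w. \<psi> (fst w) - \<psi> (snd w)"] by simp
  also have "\<dots> \<le> (\<integral>w. arr_dist n m R (fst w) (snd w) \<partial>\<pi>)"
    using int_\<psi> int_dist lip by (intro integral_mono) auto
  finally show "\<bar>(\<integral>f. \<psi> f \<partial>P) - (\<integral>f. \<psi> f \<partial>Q)\<bar> \<le> (\<integral>w. arr_dist n m R (fst w) (snd w) \<partial>\<pi>)" .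
  show "(\<integral>w. arr_dist n m R (fst w) (snd w) \<partial>\<pi>) \<le> B"
    using int_dist dist_bound by (rule integral_le_const)
qed

lemma W1_bounds:
  assumes "prob_space P" "sets P = sets (arr_space n m R)"
    and "prob_space Q" "sets Q = sets (arr_space n m R)"
    and "AE f in P. f \<in> K" "AE f in Q. f \<in> K" "K \<in> sets (arr_space n m R)"
    and "\<And>f g. f \<in> K \<Longrightarrow> g \<in> K \<Longrightarrow> arr_dist n m R f g \<le> B"
    and "\<psi> \<in> borel_measurable (arr_space n m R)" "\<And>f. \<bar>\<psi> f\<bar> \<le> c"
    and "\<And>f g. \<bar>\<psi> f - \<psi> g\<bar> \<le> arr_dist n m R f g"
  shows "\<bar>(\<integral>f. \<psi> f \<partial>P) - (\<integral>f. \<psi> f \<partial>Q)\<bar> \<le> W1 n m R P Q" and "W1 n m R P Q \<le> B"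
proof -
  note bounds = coupling_integral_bounds[OF _ assms(5-11)]
  have PQ: "P \<Otimes>\<^sub>M Q \<in> arr_couplings n m R P Q"
    using assms(1-4) by (rule prod_in_arr_couplings)
  then show "\<bar>(\<integral>f. \<psi> f \<partial>P) - (\<integral>f. \<psi> f \<partial>Q)\<bar> \<le> W1 n m R P Q"
    unfolding W1_def using bounds(1) by (intro cINF_greatest) auto
  have "bdd_below ((\<lambda>\<pi>. \<integral>w. arr_dist n m R (fst w) (snd w) \<partial>\<pi>) ` arr_couplings n m R P Q)"
    by (intro bdd_belowI[where m=0]) (auto simp: arr_dist_nonneg)
  then have "W1 n m R P Q \<le> (\<integral>w. arr_dist n m R (fst w) (snd w) \<partial>(P \<Otimes>\<^sub>M Q))"
    unfolding W1_def using PQ by (rule cINF_lower)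
  also have "\<dots> \<le> B"
    using PQ by (rule bounds(2))
  finally show "W1 n m R P Q \<le> B" .
qed

lemma W1_Phi_1_1_bounds:
  fixes L L' :: "('a::metric_space \<times> 'b::metric_space) measure"
  assumes "compact (UNIV :: 'a set)" "compact (UNIV :: 'b set)"
    and "prob_space L" "sets L = sets borel" "prob_space L'" "sets L' = sets borel"
    and "\<psi> \<in> borel_measurable (arr_space 1 1 R)" "\<And>f. \<bar>\<psi> f\<bar> \<le> c"
    and "\<And>f g. \<bar>\<psi> f - \<psi> g\<bar> \<le> arr_dist 1 1 R f g"
  shows "\<bar>(\<integral>f. \<psi> f \<partial>Phi 1 1 R T S a b L) - (\<integral>f. \<psi> f \<partial>Phi 1 1 R T S a b L')\<bar>
      \<le> W1 1 1 R (Phi 1 1 R T S a b L) (Phi 1 1 R T S a b L')"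
    and "W1 1 1 R (Phi 1 1 R T S a b L) (Phi 1 1 R T S a b L')
      \<le> card (arr_idx 1 1 R) * (\<bar>diameter (UNIV :: 'a set)\<bar> + \<bar>diameter (UNIV :: 'b set)\<bar>)"
proof -
  let ?K = "arr_cube TYPE('a) TYPE('b) 1 1 R"
  have "{f \<in> space (arr_space 1 1 R). f \<in> ?K} = ?K"
    using sets.sets_into_space[OF arr_cube_in_sets] by blast
  then have K: "{f \<in> space (arr_space 1 1 R). f \<in> ?K} \<in> sets (arr_space 1 1 R)"
    using arr_cube_in_sets by metis
  have Phi: "prob_space (Phi 1 1 R T S a b M)" "sets (Phi 1 1 R T S a b M) = sets (arr_space 1 1 R)"
    "AE f in Phi 1 1 R T S a b M. f \<in> ?K"
    if "prob_space M" "sets M = sets borel" for M :: "('a \<times> 'b) measure"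
  proof -
    note G = measurable_anch_arr_1_1[OF that(2), of R T S a b]
    show "prob_space (Phi 1 1 R T S a b M)"
      unfolding Phi_1_1_eq_distr[OF that] by (rule prob_space.prob_space_distr[OF that(1) G])
    show "sets (Phi 1 1 R T S a b M) = sets (arr_space 1 1 R)"
      by (simp add: Phi_def)
    show "AE f in Phi 1 1 R T S a b M. f \<in> ?K"
      unfolding Phi_1_1_eq_distr[OF that] AE_distr_iff[OF G K]
      using anch_arr_in_arr_cube[OF assms(1,2)] by simp
  qed
  note W1_bounds[OF Phi(1,2)[OF assms(3,4)] Phi(1,2)[OF assms(5,6)] Phi(3)[OF assms(3,4)]
      Phi(3)[OF assms(5,6)] arr_cube_in_sets arr_dist_le_on_arr_cube assms(7-9)]
  then show "\<bar>(\<integral>f. \<psi> f \<partial>Phi 1 1 R T S a b L) - (\<integral>f. \<psi> f \<partial>Phi 1 1 R T S a b L')\<bar>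
      \<le> W1 1 1 R (Phi 1 1 R T S a b L) (Phi 1 1 R T S a b L')"
    and "W1 1 1 R (Phi 1 1 R T S a b L) (Phi 1 1 R T S a b L')
      \<le> card (arr_idx 1 1 R) * (\<bar>diameter (UNIV :: 'a set)\<bar> + \<bar>diameter (UNIV :: 'b set)\<bar>)"
    by blast+
qed

theorem corollary27:
  fixes \<mu> :: "'a::metric_space measure" and \<nu> :: "'b::metric_space measure"
    and T :: "'a \<Rightarrow> 'a" and S :: "'b \<Rightarrow> 'b"
    and a :: "nat \<Rightarrow> 'a" and b :: "nat \<Rightarrow> 'b"
  assumes "compact (UNIV :: 'a set)" and "compact (UNIV :: 'b set)"
    and "prob_space \<mu>" and "sets \<mu> = sets borel"
    and "prob_space \<nu>" and "sets \<nu> = sets borel"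
    and "continuous_on UNIV T" and "T \<in> measurable \<mu> \<mu>" and "distr \<mu> \<mu> T = \<mu>"
    and "continuous_on UNIV S" and "S \<in> measurable \<nu> \<nu>" and "distr \<nu> \<nu> S = \<nu>"
    and "range a \<subseteq> msupp \<mu>" and "msupp \<mu> \<subseteq> closure (range a)"
    and "range b \<subseteq> msupp \<nu>" and "msupp \<nu> \<subseteq> closure (range b)"
    and "\<not> disjoint_sys \<mu> \<nu> T S"
  shows "\<exists>n m R. n \<ge> 1 \<and> m \<ge> 1 \<and> R \<ge> 1 \<and>
     (\<exists>\<psi>. (\<forall>f\<in>arr_cube TYPE('a) TYPE('b) n m R. \<forall>g\<in>arr_cube TYPE('a) TYPE('b) n m R.
               \<bar>\<psi> f - \<psi> g\<bar> \<le> arr_dist n m R f g) \<and>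
         (SUP L\<in>joinings \<mu> \<nu> T S.
            \<bar>(\<integral>f. \<psi> f \<partial>Phi n m R T S a b L) - (\<integral>f. \<psi> f \<partial>Phi n m R T S a b (\<mu> \<Otimes>\<^sub>M \<nu>))\<bar>) > 0)
     \<and> Dep1 n m R \<mu> \<nu> T S a b > 0"
proof -
  let ?J = "joinings \<mu> \<nu> T S" and ?P\<^sub>0 = "\<mu> \<Otimes>\<^sub>M \<nu>"
  have P\<^sub>0: "?P\<^sub>0 \<in> ?J"
    using assms by (intro prod_in_joinings) auto
  then obtain L\<^sub>0 where L\<^sub>0: "L\<^sub>0 \<in> ?J" "L\<^sub>0 \<noteq> ?P\<^sub>0"
    using assms(17) unfolding disjoint_sys_def by blast
  have AE: "AE z in L. fst z \<in> closure (range a) \<and> snd z \<in> closure (range b)"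
    if "L \<in> ?J" for L
    using assms by (intro AE_joining_marginals[OF that] AE_in_closed_superset_msupp) auto
  obtain k R C D where k: "1 \<le> k" and R: "1 \<le> R" and separates:
    "(\<integral>z. anchored_cutoff k C a R (fst z) * anchored_cutoff k D b R (snd z) \<partial>L\<^sub>0) \<noteq>
     (\<integral>z. anchored_cutoff k C a R (fst z) * anchored_cutoff k D b R (snd z) \<partial>?P\<^sub>0)"
    using anchored_cutoff_integrals_separate[OF assms(1,2) joiningsD[OF L\<^sub>0(1)] joiningsD[OF P\<^sub>0]
        AE[OF L\<^sub>0(1)] AE[OF P\<^sub>0] L\<^sub>0(2)] .
  have "0 \<le> k" "0 < k"
    using k by simp_all
  define \<psi> where "\<psi> = array_test k C D a b R"
  define gap where "gap L = \<bar>(\<integral>f. \<psi> f \<partial>Phi 1 1 R T S a b L) - (\<integral>f. \<psi> f \<partial>Phi 1 1 R T S a b ?P\<^sub>0)\<bar>"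
    for L
  have lip: "\<bar>\<psi> f - \<psi> g\<bar> \<le> arr_dist 1 1 R f g" for f g
    unfolding \<psi>_def by (rule array_test_lipschitz[OF \<open>0 < k\<close>])
  let ?W1 = "\<lambda>L. W1 1 1 R (Phi 1 1 R T S a b L) (Phi 1 1 R T S a b ?P\<^sub>0)"
  let ?B = "card (arr_idx 1 1 R) * (\<bar>diameter (UNIV :: 'a set)\<bar> + \<bar>diameter (UNIV :: 'b set)\<bar>)"
  have W1: "gap L \<le> ?W1 L" "?W1 L \<le> ?B" if "L \<in> ?J" for L
    using W1_Phi_1_1_bounds[OF assms(1,2) joiningsD[OF that] joiningsD[OF P\<^sub>0]
        array_test_measurable array_test_abs_le_one[OF k] array_test_lipschitz[OF \<open>0 < k\<close>]]
    unfolding gap_def \<psi>_def by blast+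
  have "0 < gap L\<^sub>0"
    using separates \<open>0 < k\<close> unfolding gap_def \<psi>_def
      integral_array_test_Phi_1_1[OF joiningsD[OF L\<^sub>0(1)] \<open>0 \<le> k\<close>]
      integral_array_test_Phi_1_1[OF joiningsD[OF P\<^sub>0] \<open>0 \<le> k\<close>]
    by (simp add: field_simps)
  also have "gap L\<^sub>0 \<le> (SUP L\<in>?J. gap L)"
    using W1 by (intro cSUP_upper[OF L\<^sub>0(1)] bdd_aboveI2[where M="?B"]) (rule order_trans)
  finally have "0 < (SUP L\<in>?J. gap L)" .
  moreover have "gap L\<^sub>0 \<le> Dep1 1 1 R \<mu> \<nu> T S a b"
    unfolding Dep1_def using W1(2)
    by (intro order_trans[OF W1(1)[OF L\<^sub>0(1)]] cSUP_upper[OF L\<^sub>0(1)] bdd_aboveI2)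
  ultimately show ?thesis
    using R lip \<open>0 < gap L\<^sub>0\<close> unfolding gap_def by (intro exI[of _ 1] exI[of _ R]) force
qed

end
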